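(* Let $N\ge 1$ be an integer and let $\mu$ be a real number with $-N<\mu<1$. Then every complex root of the polynomial $$p(\lambda)=\lambda^{N}-\frac{\mu}{N}\big(\lambda^{N-1}+\lambda^{N-2}+\cdots+\lambda+1\big)$$ lies in the open unit disc $\{\lambda\in\mathbb{C}:|\lambda|<1\}$.
   Context: This is the characteristic polynomial $\lambda^N-\mu(a_1\lambda^{N-1}+\cdots+a_N)$ of the delayed feedback control for a fixed point (1-cycle) with multiplier $\mu$, using uniform coefficients $a_1=\cdots=a_N=1/N$; the claim is that this polynomial is Schur stable for all $\mu\in(-N,1)$. *)

theory Defs
  imports Complex_Main
begin

end

theory Submission
  imports Defs "HOL-Analysis.Linear_Algebra"
begin

text \<open>
  Write \<open>c = \<mu>/N\<close> and suppose a root \<open>z\<close> has \<open>|z| \<ge> 1\<close>. If \<open>c \<ge> 0\<close>, the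
  triangle inequality gives \<open>|z|\<^sup>N \<le> c N |z|\<^sup>N < |z|\<^sup>N\<close>. If \<open>c < 0\<close>,
  multiplying the root equation by \<open>z - 1\<close> yields
  \<open>z\<^sup>N\<^sup>+\<^sup>1 = (1 + c) z\<^sup>N + (-c)\<close>, a convex combination of \<open>z\<^sup>N\<close> and \<open>1\<close>;
  hence \<open>|z| \<le> 1\<close>, so \<open>|z| = 1\<close>, equality in the triangle inequality
  forces \<open>z\<^sup>N = 1\<close> and then \<open>z = 1\<close>, which is not a root since \<open>c N \<noteq> 1\<close>.
\<close>

lemma norm_sum_powers_le:
  fixes z :: "'a::real_normed_div_algebra"
  assumes "1 \<le> norm z"
  shows "norm (\<Sum>k<N. z ^ k) \<le> real N * norm z ^ N"
proof -
  have "norm (\<Sum>k<N. z ^ k) \<le> (\<Sum>k<N. norm z ^ k)"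
    by (metis (no_types, lifting) norm_power norm_sum sum.cong)
  also have "\<dots> \<le> (\<Sum>k<N. norm z ^ N)"
    by (rule sum_mono) (use assms in \<open>auto intro: power_increasing\<close>)
  finally show ?thesis by simp
qed

lemma root_shift_equation:
  fixes z c :: "'a::comm_ring_1"
  assumes "z ^ N = c * (\<Sum>k<N. z ^ k)"
  shows "z ^ Suc N = (1 + c) * z ^ N - c"
proof -
  have "(z - 1) * z ^ N = c * ((z - 1) * (\<Sum>k<N. z ^ k))"
    using assms by (simp add: mult.left_commute)
  also have "\<dots> = c * (z ^ N - 1)"
    by (simp add: power_diff_1_eq)
  finally show ?thesis by (simp add: algebra_simps)
qed

lemma convex_shift_root_eq_1:
  fixes z :: complex and a b :: real
  assumes "0 < a" "0 < b" "a + b = 1" "1 \<le> cmod z"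
    and shift: "z ^ Suc N = of_real a * z ^ N + of_real b"
  shows "z = 1"
proof -
  have "cmod z * cmod z ^ N = cmod (of_real a * z ^ N + of_real b)"
    by (metis shift norm_mult norm_power power_Suc)
  also have "\<dots> \<le> a * cmod z ^ N + b"
    using norm_triangle_ineq[of "of_real a * z ^ N" "of_real b"] assms(1,2)
    by (simp add: norm_mult norm_power)
  also have "\<dots> \<le> a * cmod z ^ N + b * cmod z ^ N"
    using assms(2) one_le_power[OF assms(4)] by simp
  also have "\<dots> = cmod z ^ N"
    using \<open>a + b = 1\<close> by (simp flip: distrib_right)
  finally have "cmod z = 1"
    using assms(4) by (simp add: mult_le_cancel_right2 less_le_trans[OF zero_less_one])
  then have "cmod (of_real a * z ^ N + of_real b) = cmod (of_real a * z ^ N) + cmod (of_real b)"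
    using assms(1-3) by (simp flip: shift add: norm_mult norm_power)
  then have "cmod (of_real a * z ^ N) *\<^sub>R of_real b = cmod (of_real b) *\<^sub>R (of_real a * z ^ N)"
    unfolding norm_triangle_eq .
  then have "of_real (a * b) * 1 = of_real (a * b) * z ^ N"
    using assms(1,2) \<open>cmod z = 1\<close> by (simp add: norm_mult norm_power scaleR_conv_of_real)
  then have "z ^ N = 1"
    using assms(1,2) by (metis mult_left_cancel mult_pos_pos of_real_eq_0_iff order_less_irrefl)
  then show "z = 1"
    using shift \<open>a + b = 1\<close> by (metis of_real_1 of_real_add mult_1_right power_Suc)
qed

theorem mainTheorem3:
  fixes N :: nat and mu :: real and z :: complex
  assumes "N \<ge> 1"
    and "- real N < mu" and "mu < 1"
    and "z ^ N - complex_of_real (mu / real N) * (\<Sum>k<N. z ^ k) = 0"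
  shows "cmod z < 1"
proof (rule ccontr)
  assume "\<not> cmod z < 1"
  then have z_out: "1 \<le> cmod z" by simp
  define c where "c = mu / real N"
  have "-1 < c" and "c * N < 1"
    using assms(1-3) by (simp_all add: c_def field_simps)
  have root: "z ^ N = of_real c * (\<Sum>k<N. z ^ k)"
    using assms(4) by (simp add: c_def)
  show False
  proof (cases "0 \<le> c")
    case True
    have "cmod z ^ N = cmod (of_real c * (\<Sum>k<N. z ^ k))"
      by (simp flip: root add: norm_power)
    also have "\<dots> = c * cmod (\<Sum>k<N. z ^ k)"
      using True by (simp add: norm_mult)
    also have "\<dots> \<le> (c * N) * cmod z ^ N"
      using norm_sum_powers_le[OF z_out] True by (simp add: mult_left_mono mult.assoc)
    also have "\<dots> < cmod z ^ N"
      using \<open>c * N < 1\<close> one_le_power[OF z_out, of N] by simp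
    finally show False by simp
  next
    case False
    have "z ^ Suc N = of_real (1 + c) * z ^ N + of_real (- c)"
      using root_shift_equation[OF root] by simp
    then have "z = 1"
      using convex_shift_root_eq_1[of "1 + c" "- c" z N] \<open>-1 < c\<close> False z_out by simp
    then have "complex_of_real (c * real N) = 1"
      using root by simp
    then have "c * real N = 1"
      using of_real_eq_1_iff by blast
    then show False
      using False mult_nonpos_nonneg[of c "real N"] by simp
  qed
qed

end
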